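(* Let $n=2k$ and let $X\subset\mathbb{P}^{n-1}_\mathbb{C}$ be the smooth quadric $\sum_{j=1}^k z_{2j-1}z_{2j}=0$, with the action of $T_\mathbb{C}=(\mathbb{C}^* )^k$ given by $t\cdot(z_1:\dots:z_n)=(t_1z_1:t_1^{-1}z_2:\dots:t_kz_{2k-1}:t_k^{-1}z_{2k})$ and $T=(S^1)^k\subset T_\mathbb{C}$. Let \[\mu(z_1:\dots:z_n)=\frac{1}{\sum_{i=1}^n|z_i|^2}\sum_{j=1}^k(|z_{2j-1}|^2-|z_{2j}|^2)e_j\] be the moment map and $P=\mu(X)=\mathrm{conv}(\pm e_1,\dots,\pm e_k)$. Then for every $u\in\partial P$ the preimage $\mu^{-1}(u)\cap X$ consists of exactly one $T$-orbit; consequently the GIT quotient $Y_{\lambda(u)}$ is a single point.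
   Context: $e_j$ denotes the $j$-th standard basis vector of $\mathbb{R}^k$. For $u\in P$, $Y_{\lambda(u)}$ denotes the GIT quotient $X^{ss}(u)/\!\!/T_\mathbb{C}$, where $X^{ss}(u)$ is the set of $x\in X$ with $u\in\mu(\overline{T_\mathbb{C}\cdot x})$; it is homeomorphic to $\mu^{-1}(u)/T$. *)

theory Defs
  imports "HOL-Analysis.Analysis"
begin

text \<open>Homogeneous coordinates of a point of P^{2k-1} are encoded as a pair (a,b) of vectors
  in C^k with a$j = z_{2j-1}, b$j = z_{2j}; the index type 'k has k = CARD('k) elements.
  Two nonzero pairs represent the same projective point iff they differ by a nonzero scalar.\<close>

type_synonym 'k hcoord = "(complex^'k) \<times> (complex^'k)"

definition quadric :: "'k::finite hcoord set" where
  "quadric = {(a,b). (a,b) \<noteq> 0 \<and> (\<Sum>j\<in>UNIV. a$j * b$j) = 0}"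

definition torus_act :: "complex^'k \<Rightarrow> 'k::finite hcoord \<Rightarrow> 'k hcoord" where
  "torus_act t z = ((\<chi> j. t$j * (fst z)$j), (\<chi> j. inverse (t$j) * (snd z)$j))"

definition compact_torus :: "(complex^'k::finite) set" where
  "compact_torus = {t. \<forall>j. norm (t$j) = 1}"

definition moment_map :: "'k::finite hcoord \<Rightarrow> real^'k" where
  "moment_map z = (1 / (\<Sum>j\<in>UNIV. (norm ((fst z)$j))\<^sup>2 + (norm ((snd z)$j))\<^sup>2)) *\<^sub>R
      (\<chi> j. (norm ((fst z)$j))\<^sup>2 - (norm ((snd z)$j))\<^sup>2)"

definition cross_polytope :: "(real^'k::finite) set" where
  "cross_polytope = convex hull (range (\<lambda>j. axis j 1) \<union> range (\<lambda>j. - axis j 1))"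

definition T_orbit_reps :: "'k::finite hcoord \<Rightarrow> 'k hcoord set" where
  "T_orbit_reps z = {w. \<exists>t\<in>compact_torus. \<exists>c::complex. c \<noteq> 0 \<and> w = (c *s fst (torus_act t z), c *s snd (torus_act t z))}"

end

theory Submission
  imports Defs
begin

text \<open>The cross-polytope is the unit ball of the \<open>\<ell>\<^sup>1\<close>-norm, so a boundary point \<open>u\<close> satisfies
  \<open>\<Sum>\<^sub>j \<bar>u\<^sub>j\<bar> = 1\<close>. Since \<open>\<bar>|a\<^sub>j|\<^sup>2 - |b\<^sub>j|\<^sup>2\<bar> \<le> |a\<^sub>j|\<^sup>2 + |b\<^sub>j|\<^sup>2\<close>, a point \<open>(a,b)\<close> with
  \<open>\<mu>(a,b) = u\<close> must have equality in every coordinate, i.e. \<open>a\<^sub>j b\<^sub>j = 0\<close> for all \<open>j\<close>. Such a point is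
  determined up to the phases of its coordinates and an overall scalar by the moduli
  \<open>|a\<^sub>j|\<^sup>2 = |(a,b)|\<^sup>2 max u\<^sub>j 0\<close>, \<open>|b\<^sub>j|\<^sup>2 = |(a,b)|\<^sup>2 max (-u\<^sub>j) 0\<close>, and the phases are exactly
  what the compact torus adjusts. Hence the fibre is the orbit of the point with real coordinates
  \<open>(\<surd>(max u\<^sub>j 0), \<surd>(max (-u\<^sub>j) 0))\<close>, which lies on the quadric.\<close>

lemma convex_sum_abs_le: "convex {v::real^'k::finite. (\<Sum>j\<in>UNIV. \<bar>v$j\<bar>) \<le> r}"
proof (rule convexI, clarsimp)
  fix x y :: "real^'k" and a b :: real
  assume x: "(\<Sum>j\<in>UNIV. \<bar>x$j\<bar>) \<le> r" and y: "(\<Sum>j\<in>UNIV. \<bar>y$j\<bar>) \<le> r"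
    and a: "0 \<le> a" and b: "0 \<le> b" and ab: "a + b = 1"
  have "(\<Sum>j\<in>UNIV. \<bar>a * x$j + b * y$j\<bar>) \<le> (\<Sum>j\<in>UNIV. a * \<bar>x$j\<bar> + b * \<bar>y$j\<bar>)"
    by (intro sum_mono) (metis a b abs_mult abs_of_nonneg abs_triangle_ineq)
  also have "\<dots> = a * (\<Sum>j\<in>UNIV. \<bar>x$j\<bar>) + b * (\<Sum>j\<in>UNIV. \<bar>y$j\<bar>)"
    by (simp add: sum.distrib sum_distrib_left)
  also have "\<dots> \<le> a * r + b * r"
    using x y a b by (intro add_mono mult_left_mono)
  finally show "(\<Sum>j\<in>UNIV. \<bar>a * x$j + b * y$j\<bar>) \<le> r"
    using ab by (simp add: distrib_right[symmetric])
qed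

lemma convex_cross_polytope: "convex cross_polytope"
  unfolding cross_polytope_def by simp

lemma axis_in_cross_polytope:
  "axis j 1 \<in> cross_polytope" "- axis j 1 \<in> cross_polytope"
  unfolding cross_polytope_def by (auto intro: hull_inc)

lemma zero_in_cross_polytope: "0 \<in> cross_polytope"
proof -
  have "(1/2::real) *\<^sub>R axis j 1 + (1/2::real) *\<^sub>R (- axis j 1) \<in> cross_polytope" for j :: "'k::finite"
    by (intro convexD convex_cross_polytope axis_in_cross_polytope) auto
  then show ?thesis by simp
qed

lemma cross_polytope_subset_l1_ball:
  "cross_polytope \<subseteq> {v::real^'k::finite. (\<Sum>j\<in>UNIV. \<bar>v$j\<bar>) \<le> 1}"
  unfolding cross_polytope_def
proof (intro hull_minimal convex_sum_abs_le)
  have "(\<Sum>j\<in>UNIV. \<bar>(s *\<^sub>R axis i (1::real)) $ j\<bar>) = 1" if "\<bar>s\<bar> = 1" for i :: 'k and s :: real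
  proof -
    have "\<bar>(s *\<^sub>R axis i (1::real)) $ j\<bar> = (if j = i then 1 else 0)" for j
      using that by (simp add: axis_def)
    then show ?thesis by simp
  qed
  from this[of 1] this[of "-1"]
  show "range (\<lambda>j. axis j 1) \<union> range (\<lambda>j. - axis j 1) \<subseteq> {v::real^'k. (\<Sum>j\<in>UNIV. \<bar>v$j\<bar>) \<le> 1}"
    by auto
qed

lemma l1_ball_subset_cross_polytope:
  "{v::real^'k::finite. (\<Sum>j\<in>UNIV. \<bar>v$j\<bar>) \<le> 1} \<subseteq> cross_polytope"
proof
  fix v :: "real^'k" assume "v \<in> {v. (\<Sum>j\<in>UNIV. \<bar>v$j\<bar>) \<le> 1}"
  then have le1: "(\<Sum>j\<in>UNIV. \<bar>v$j\<bar>) \<le> 1" by simp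
  define \<sigma> where "\<sigma> = (\<Sum>j\<in>UNIV. \<bar>v$j\<bar>)"
  define w where "w j = sgn (v$j) *\<^sub>R axis j (1::real)" for j
  have "v = (\<Sum>j\<in>UNIV. (v$j) *\<^sub>R axis j 1)"
    by (simp add: vec_eq_iff sum_component axis_def if_distrib cong: if_cong)
  also have "\<dots> = (\<Sum>j\<in>UNIV. \<bar>v$j\<bar> *\<^sub>R w j)"
    by (simp add: w_def abs_mult_sgn)
  finally have v_eq: "v = (\<Sum>j\<in>UNIV. \<bar>v$j\<bar> *\<^sub>R w j)" .
  have "w j \<in> cross_polytope \<or> w j = 0" for j
    using axis_in_cross_polytope by (auto simp: w_def sgn_real_def)
  then have w_in: "w j \<in> cross_polytope" for j
    using zero_in_cross_polytope by metis
  show "v \<in> cross_polytope"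
  proof (cases "\<sigma> = 0")
    case True
    then have "v = 0"
      by (simp add: \<sigma>_def sum_nonneg_eq_0_iff vec_eq_iff)
    then show ?thesis using zero_in_cross_polytope by simp
  next
    case False
    then have \<sigma>_pos: "\<sigma> > 0" by (simp add: \<sigma>_def order_le_neq_trans sum_nonneg)
    have "(\<Sum>j\<in>UNIV. (\<bar>v$j\<bar> / \<sigma>) *\<^sub>R w j) \<in> cross_polytope"
      using \<sigma>_pos w_in
      by (intro convex_sum convex_cross_polytope) (auto simp: \<sigma>_def sum_divide_distrib[symmetric])
    then have "\<sigma> *\<^sub>R (\<Sum>j\<in>UNIV. (\<bar>v$j\<bar> / \<sigma>) *\<^sub>R w j) + (1 - \<sigma>) *\<^sub>R 0 \<in> cross_polytope"
      using \<sigma>_pos le1 zero_in_cross_polytope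
      by (intro convexD convex_cross_polytope) (auto simp: \<sigma>_def)
    moreover have "\<sigma> *\<^sub>R (\<Sum>j\<in>UNIV. (\<bar>v$j\<bar> / \<sigma>) *\<^sub>R w j) = v"
      using \<sigma>_pos by (subst v_eq) (simp add: scaleR_sum_right)
    ultimately show ?thesis by simp
  qed
qed

lemma cross_polytope_eq_l1_ball:
  "cross_polytope = {v::real^'k::finite. (\<Sum>j\<in>UNIV. \<bar>v$j\<bar>) \<le> 1}"
  using cross_polytope_subset_l1_ball l1_ball_subset_cross_polytope by blast

lemma sum_abs_eq_1_if_frontier_cross_polytope:
  fixes u :: "real^'k::finite"
  assumes "u \<in> frontier cross_polytope"
  shows "(\<Sum>j\<in>UNIV. \<bar>u$j\<bar>) = 1"
proof -
  have "closed (cross_polytope :: (real^'k) set)"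
    unfolding cross_polytope_eq_l1_ball by (intro closed_Collect_le continuous_intros)
  then have "(\<Sum>j\<in>UNIV. \<bar>u$j\<bar>) \<le> 1"
    using assms by (simp add: frontier_def cross_polytope_eq_l1_ball)
  moreover have "{v::real^'k. (\<Sum>j\<in>UNIV. \<bar>v$j\<bar>) < 1} \<subseteq> interior cross_polytope"
    unfolding cross_polytope_eq_l1_ball
    by (intro interior_maximal open_Collect_less continuous_intros) auto
  then have "\<not> (\<Sum>j\<in>UNIV. \<bar>u$j\<bar>) < 1"
    using assms by (auto simp: frontier_def)
  ultimately show ?thesis by linarith
qed

lemma norm_hcoord_sq:
  fixes z :: "'k::finite hcoord"
  shows "(norm z)\<^sup>2 = (\<Sum>j\<in>UNIV. (norm (fst z $ j))\<^sup>2 + (norm (snd z $ j))\<^sup>2)"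
  by (cases z) (simp add: norm_Pair norm_vec_def L2_set_def sum.distrib sum_nonneg)

lemma moment_map_nth:
  "moment_map z $ j = ((norm (fst z $ j))\<^sup>2 - (norm (snd z $ j))\<^sup>2) / (norm z)\<^sup>2"
  by (simp add: moment_map_def norm_hcoord_sq)

lemma quadric_iff:
  "z \<in> quadric \<longleftrightarrow> z \<noteq> 0 \<and> (\<Sum>j\<in>UNIV. fst z $ j * snd z $ j) = 0"
  by (cases z) (simp add: quadric_def)

lemma coordinate_product_zero_if_sum_abs_moment_map_eq_1:
  fixes z :: "'k::finite hcoord"
  assumes "z \<noteq> 0" and "(\<Sum>i\<in>UNIV. \<bar>moment_map z $ i\<bar>) = 1"
  shows "fst z $ j * snd z $ j = 0"
proof -
  define d where "d i = (norm (fst z $ i))\<^sup>2 + (norm (snd z $ i))\<^sup>2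
    - \<bar>(norm (fst z $ i))\<^sup>2 - (norm (snd z $ i))\<^sup>2\<bar>" for i
  have "(\<Sum>i\<in>UNIV. \<bar>(norm (fst z $ i))\<^sup>2 - (norm (snd z $ i))\<^sup>2\<bar>)
      = (\<Sum>i\<in>UNIV. \<bar>moment_map z $ i\<bar>) * (norm z)\<^sup>2"
    using assms(1) by (simp add: moment_map_nth abs_divide sum_distrib_right)
  then have "(\<Sum>i\<in>UNIV. d i) = 0"
    using assms(2) by (simp add: d_def sum_subtractf norm_hcoord_sq)
  moreover have "d i \<ge> 0" for i
    by (simp add: d_def abs_le_iff)
  ultimately have "d j = 0"
    by (simp add: sum_nonneg_eq_0_iff)
  then have "norm (fst z $ j) = 0 \<or> norm (snd z $ j) = 0"
    by (auto simp: d_def abs_if split: if_splits)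
  then show ?thesis by simp
qed

lemma moment_map_T_orbit_reps:
  assumes "w \<in> T_orbit_reps z"
  shows "moment_map w = moment_map z"
proof -
  obtain t c where t: "t \<in> compact_torus" and c: "c \<noteq> 0"
    and w: "w = (c *s fst (torus_act t z), c *s snd (torus_act t z))"
    using assms by (auto simp: T_orbit_reps_def)
  have t_norm: "norm (t $ j) = 1" for j
    using t by (simp add: compact_torus_def)
  have fst_w: "(norm (fst w $ j))\<^sup>2 = (norm c)\<^sup>2 * (norm (fst z $ j))\<^sup>2" for j
    by (simp add: w torus_act_def norm_mult t_norm power_mult_distrib)
  have snd_w: "(norm (snd w $ j))\<^sup>2 = (norm c)\<^sup>2 * (norm (snd z $ j))\<^sup>2" for j
    by (simp add: w torus_act_def norm_mult norm_inverse t_norm power_mult_distrib)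
  have "(norm w)\<^sup>2 = (norm c)\<^sup>2 * (norm z)\<^sup>2"
    by (simp add: norm_hcoord_sq fst_w snd_w sum_distrib_left distrib_left)
  then show ?thesis
    using c by (simp add: vec_eq_iff moment_map_nth fst_w snd_w right_diff_distrib[symmetric])
qed

lemma T_orbit_reps_subset_quadric:
  assumes "z \<in> quadric"
  shows "T_orbit_reps z \<subseteq> quadric"
proof
  fix w assume "w \<in> T_orbit_reps z"
  then obtain t c where t: "t \<in> compact_torus" and c: "c \<noteq> 0"
    and w: "w = (c *s fst (torus_act t z), c *s snd (torus_act t z))"
    by (auto simp: T_orbit_reps_def)
  have t_nz: "t $ j \<noteq> 0" for j
    using t by (auto simp: compact_torus_def dest: spec[of _ j])
  have fst_w: "fst w $ j = (c * t $ j) * fst z $ j"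
    and snd_w: "snd w $ j = (c * inverse (t $ j)) * snd z $ j" for j
    by (simp_all add: w torus_act_def)
  have "fst w $ j * snd w $ j = c\<^sup>2 * (fst z $ j * snd z $ j)" for j
    using t_nz by (simp add: fst_w snd_w power2_eq_square field_simps)
  then have "(\<Sum>j\<in>UNIV. fst w $ j * snd w $ j) = c\<^sup>2 * (\<Sum>j\<in>UNIV. fst z $ j * snd z $ j)"
    by (simp add: sum_distrib_left)
  moreover obtain j where "fst z $ j \<noteq> 0 \<or> snd z $ j \<noteq> 0"
    using assms by (auto simp: quadric_iff prod_eq_iff vec_eq_iff)
  then have "w \<noteq> 0"
    using c t_nz by (auto simp: prod_eq_iff vec_eq_iff fst_w snd_w)
  ultimately show "w \<in> quadric"
    using assms by (simp add: quadric_iff)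
qed

lemma norm_nth_eq_if_coordinate_product_zero:
  fixes z :: "'k::finite hcoord"
  assumes "fst z $ j * snd z $ j = 0"
  shows "norm (fst z $ j) = norm z * sqrt (max (moment_map z $ j) 0)"
    and "norm (snd z $ j) = norm z * sqrt (max (- moment_map z $ j) 0)"
proof -
  have sqrt_sq_div: "sqrt ((x / norm z)\<^sup>2) = x / norm z" if "x \<ge> 0" for x
    using that by simp
  consider "z = 0" | "z \<noteq> 0" "fst z $ j = 0" | "z \<noteq> 0" "snd z $ j = 0"
    using assms by auto
  then have "norm (fst z $ j) = norm z * sqrt (max (moment_map z $ j) 0)
    \<and> norm (snd z $ j) = norm z * sqrt (max (- moment_map z $ j) 0)"
  proof cases
    case 2
    then have "moment_map z $ j = - (norm (snd z $ j) / norm z)\<^sup>2"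
      by (simp add: moment_map_nth power_divide)
    with 2 show ?thesis by (simp add: max_def sqrt_sq_div)
  next
    case 3
    then have "moment_map z $ j = (norm (fst z $ j) / norm z)\<^sup>2"
      by (simp add: moment_map_nth power_divide)
    with 3 show ?thesis by (simp add: max_def sqrt_sq_div)
  qed simp
  then show "norm (fst z $ j) = norm z * sqrt (max (moment_map z $ j) 0)"
    and "norm (snd z $ j) = norm z * sqrt (max (- moment_map z $ j) 0)"
    by auto
qed

definition moment_section :: "real^'k::finite \<Rightarrow> 'k hcoord" where
  "moment_section u = ((\<chi> j. complex_of_real (sqrt (max (u$j) 0))),
                       (\<chi> j. complex_of_real (sqrt (max (- u$j) 0))))"

lemma moment_section_in_quadric:
  assumes "u \<noteq> 0"
  shows "moment_section u \<in> quadric"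
proof -
  obtain j where "u $ j \<noteq> 0"
    using assms by (auto simp: vec_eq_iff)
  then have "fst (moment_section u) $ j \<noteq> 0 \<or> snd (moment_section u) $ j \<noteq> 0"
    by (simp add: moment_section_def max_def)
  then have "moment_section u \<noteq> 0"
    by auto
  moreover have "(\<Sum>j\<in>UNIV. fst (moment_section u) $ j * snd (moment_section u) $ j) = 0"
    by (intro sum.neutral) (simp add: moment_section_def max_def)
  ultimately show ?thesis
    by (simp add: quadric_iff)
qed

lemma moment_map_moment_section:
  assumes "(\<Sum>j\<in>UNIV. \<bar>u$j\<bar>) = 1"
  shows "moment_map (moment_section u) = u"
proof -
  have "(norm (fst (moment_section u) $ j))\<^sup>2 + (norm (snd (moment_section u) $ j))\<^sup>2 = \<bar>u$j\<bar>"
    for j by (simp add: moment_section_def max_def)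
  then have "(norm (moment_section u))\<^sup>2 = (\<Sum>j\<in>UNIV. \<bar>u$j\<bar>)"
    by (simp add: norm_hcoord_sq)
  then show ?thesis
    using assms by (simp add: vec_eq_iff moment_map_nth moment_section_def max_def)
qed

lemma in_T_orbit_reps_moment_section:
  fixes z :: "'k::finite hcoord"
  assumes "z \<noteq> 0" and coord: "\<And>j. fst z $ j * snd z $ j = 0"
  shows "z \<in> T_orbit_reps (moment_section (moment_map z))"
proof -
  define t :: "complex^'k" where
    "t = (\<chi> j. if fst z $ j \<noteq> 0 then sgn (fst z $ j)
               else if snd z $ j \<noteq> 0 then inverse (sgn (snd z $ j)) else 1)"
  define c where "c = complex_of_real (norm z)"
  have sgn_mult_norm: "sgn x * of_real (norm x) = x" for x :: complex
    by (cases "x = 0") (simp_all add: sgn_div_norm scaleR_conv_of_real)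
  have "t \<in> compact_torus"
    by (simp add: compact_torus_def t_def norm_inverse norm_sgn)
  moreover have "c \<noteq> 0"
    using assms(1) by (simp add: c_def)
  moreover have "fst z $ j = c * (t $ j * of_real (sqrt (max (moment_map z $ j) 0)))" for j
  proof -
    have "fst z $ j = t $ j * of_real (norm (fst z $ j))"
      using sgn_mult_norm[of "fst z $ j"] by (simp add: t_def)
    also have "\<dots> = t $ j * of_real (norm z * sqrt (max (moment_map z $ j) 0))"
      by (simp only: norm_nth_eq_if_coordinate_product_zero(1)[OF coord])
    finally show ?thesis
      by (simp add: c_def ac_simps)
  qed
  moreover have "snd z $ j = c * (inverse (t $ j) * of_real (sqrt (max (- moment_map z $ j) 0)))" for j
  proof -
    have "snd z $ j = inverse (t $ j) * of_real (norm (snd z $ j))"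
      using sgn_mult_norm[of "snd z $ j"] coord[of j] by (auto simp: t_def)
    also have "\<dots> = inverse (t $ j) * of_real (norm z * sqrt (max (- moment_map z $ j) 0))"
      by (simp only: norm_nth_eq_if_coordinate_product_zero(2)[OF coord])
    finally show ?thesis
      by (simp add: c_def ac_simps)
  qed
  ultimately show ?thesis
    unfolding T_orbit_reps_def
    by (intro CollectI bexI[of _ t] exI[of _ c])
      (simp add: torus_act_def moment_section_def vec_eq_iff prod_eq_iff)
qed

theorem lemma3p2:
  fixes u :: "real^'k::finite"
  assumes "u \<in> frontier cross_polytope"
  shows "\<exists>z0\<in>quadric. moment_map z0 = u \<and>
           {z \<in> quadric. moment_map z = u} = T_orbit_reps z0"
proof -
  have u_sum: "(\<Sum>j\<in>UNIV. \<bar>u$j\<bar>) = 1"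
    using assms by (rule sum_abs_eq_1_if_frontier_cross_polytope)
  then have "u \<noteq> 0" by auto
  define z0 where "z0 = moment_section u"
  have z0_quadric: "z0 \<in> quadric" and z0_moment: "moment_map z0 = u"
    using \<open>u \<noteq> 0\<close> u_sum by (simp_all add: z0_def moment_section_in_quadric moment_map_moment_section)
  have "{z \<in> quadric. moment_map z = u} \<subseteq> T_orbit_reps z0"
  proof
    fix z assume "z \<in> {z \<in> quadric. moment_map z = u}"
    then have "z \<noteq> 0" and z_moment: "moment_map z = u"
      by (simp_all add: quadric_iff)
    have "fst z $ j * snd z $ j = 0" for j
      using \<open>z \<noteq> 0\<close> u_sum z_moment by (intro coordinate_product_zero_if_sum_abs_moment_map_eq_1) auto
    with \<open>z \<noteq> 0\<close> have "z \<in> T_orbit_reps (moment_section (moment_map z))"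
      by (rule in_T_orbit_reps_moment_section)
    then show "z \<in> T_orbit_reps z0"
      by (simp add: z0_def z_moment)
  qed
  moreover have "T_orbit_reps z0 \<subseteq> {z \<in> quadric. moment_map z = u}"
    using T_orbit_reps_subset_quadric[OF z0_quadric] moment_map_T_orbit_reps z0_moment by blast
  ultimately show ?thesis
    using z0_quadric z0_moment by blast
qed

end
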